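(* Let $k\ge 1$ be an integer. In the power series expansions (in $y,z,q$) of $$\frac{1}{(yq;q)_\infty}\sum_{n\ge 0}\frac{(-1)^n y^n q^{n(n+1)/2} (z;q^k)_n}{(q;q)_n}$$ and of $$(-yq;q)_\infty \sum_{n\ge 0}\frac{(-1)^n y^n q^n (z;q^k)_n}{(q;q)_n},$$ the coefficient of $y^\ell z^m q^n$ is nonnegative for all $\ell,m,n$.
   Context: The $q$-Pochhammer symbol is $(A;q)_n=\prod_{j=0}^{n-1}(1-Aq^j)$ for $n\in\mathbb{N}\cup\{\infty\}$. *)

theory Defs
  imports "HOL-Computational_Algebra.Formal_Power_Series" "HOL-Computational_Algebra.Polynomial"
begin

text \<open>Power series in y, z, q are modelled as formal power series in q
(variable fps_X) whose coefficients are polynomials in y with coefficients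
polynomials in z, over int.  Convergence of infinite sums/products is in the
q-adic (fps) metric topology.\<close>

type_synonym ser = "int poly poly fps"

definition qpoch :: "'a::comm_ring_1 \<Rightarrow> 'a \<Rightarrow> nat \<Rightarrow> 'a" where
  "qpoch A Q n = (\<Prod>j<n. (1 - A * Q ^ j))"

definition qpoch_inf :: "ser \<Rightarrow> ser \<Rightarrow> ser" where
  "qpoch_inf A Q = lim (\<lambda>N. qpoch A Q N)"

definition vq :: ser where "vq = fps_X"
definition vy :: ser where "vy = fps_const [:0, 1:]"
definition vz :: ser where "vz = fps_const [:[:0, 1:]:]"

definition finv :: "ser \<Rightarrow> ser" where
  "finv f = fps_right_inverse f 1"

definition coeff_yzq :: "ser \<Rightarrow> nat \<Rightarrow> nat \<Rightarrow> nat \<Rightarrow> int" where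
  "coeff_yzq F l m n = coeff (coeff (fps_nth F n) l) m"

definition series1 :: "nat \<Rightarrow> ser" where
  "series1 k = finv (qpoch_inf (vy * vq) vq) *
     (\<Sum>n. (-1) ^ n * vy ^ n * vq ^ (n * (n + 1) div 2) * qpoch vz (vq ^ k) n
            * finv (qpoch vq vq n))"

definition series2 :: "nat \<Rightarrow> ser" where
  "series2 k = qpoch_inf (- (vy * vq)) vq *
     (\<Sum>n. (-1) ^ n * vy ^ n * vq ^ n * qpoch vz (vq ^ k) n * finv (qpoch vq vq n))"

end

theory Submission
  imports Defs
begin

(* Put Q = q^k. Each series is P^-1 * sum_n t_n (z;Q)_n with z-free weights t_n, where
   P = (yq;q)_inf for the first series and P = 1/(-yq;q)_inf for the second; by Euler's
   identities sum_n t_n q^(b n) equals P/(yq;q)_b, resp. P (-yq;q)_b.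

   By the q-binomial theorem (Q;Q)_m [z^m] (z;Q)_n = Q^(m choose 2) prod_{s<m} (Q^(n-s) - 1),
   and for fixed n these products, weighted by Q^(i (n-m)), solve the q-difference system
   V(m, i+1) = V(m, i) + Q^i V(m+1, i) with row V(0, i) = Q^(i n). A solution is determined by
   its row m = 0, so any solution V with P V(0, i) = sum_n t_n Q^(i n) satisfies
   [z^m] of the series = Q^(m choose 2) V(m, 0) / (Q;Q)_m.

   Such a V with nonnegative coefficients exists: the prescribed row 1/(yq;q)_(k i), resp.
   (-yq;q)_(k i), is the product over the residues r < k of 1/(yq^(r+1);Q)_i, resp.
   (-yq^(r+1);Q)_i; each factor extends to an explicit nonnegative solution, and the
   convolution of two solutions with Gaussian binomial weights is again a solution. *)

unbundle fps_syntax

section \<open>Power series summed coefficientwise\<close>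

definition vanishes_below :: "nat \<Rightarrow> 'a::zero fps \<Rightarrow> bool" where
  "vanishes_below e F \<longleftrightarrow> (\<forall>j<e. F $ j = 0)"

lemma vanishes_below_mult_left:
  fixes F G :: "'a::comm_ring_1 fps"
  shows "vanishes_below e G \<Longrightarrow> vanishes_below e (F * G)"
  unfolding vanishes_below_def by (auto simp: fps_mult_nth intro!: sum.neutral)

lemma vanishes_below_mult_right:
  fixes F G :: "'a::comm_ring_1 fps"
  shows "vanishes_below e F \<Longrightarrow> vanishes_below e (F * G)"
  using vanishes_below_mult_left[of e F G] by (simp add: mult.commute)

lemma vanishes_below_fps_X_power:
  "e \<le> d \<Longrightarrow> vanishes_below e (fps_X ^ d :: 'a::comm_ring_1 fps)"
  unfolding vanishes_below_def by auto

lemma vanishes_below_diff: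
  fixes F G :: "'a::ab_group_add fps"
  shows "vanishes_below e F \<Longrightarrow> vanishes_below e G \<Longrightarrow> vanishes_below e (F - G)"
  unfolding vanishes_below_def by auto

lemma tendsto_fps_vanishes_below:
  fixes f :: "nat \<Rightarrow> 'a::ab_group_add fps"
  assumes "\<And>N. vanishes_below N (f N - L)"
  shows "f \<longlonglongrightarrow> L"
proof (rule tendsto_fpsI)
  fix j
  have "f N $ j = L $ j" if "Suc j \<le> N" for N
    using assms[of N] that by (simp add: vanishes_below_def)
  then show "\<forall>\<^sub>F N in sequentially. f N $ j = L $ j"
    unfolding eventually_sequentially by blast
qed

definition fps_suminf :: "(nat \<Rightarrow> 'a::comm_monoid_add fps) \<Rightarrow> 'a fps" where
  "fps_suminf a = Abs_fps (\<lambda>j. \<Sum>n\<le>j. a n $ j)"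

context
  fixes a :: "nat \<Rightarrow> 'a::comm_ring_1 fps"
  assumes vanishing: "\<And>n. vanishes_below n (a n)"
begin

lemma fps_suminf_nth: "j < N \<Longrightarrow> fps_suminf a $ j = (\<Sum>n<N. a n $ j)"
  unfolding fps_suminf_def fps_nth_Abs_fps using vanishing
  by (intro sum.mono_neutral_left) (auto simp: vanishes_below_def not_le)

lemma sums_fps_suminf: "a sums fps_suminf a"
  unfolding sums_def
proof (rule tendsto_fpsI)
  fix j
  have "(\<Sum>n<N. a n) $ j = fps_suminf a $ j" if "Suc j \<le> N" for N
    using that fps_suminf_nth[of j N] by (simp add: fps_sum_nth)
  then show "\<forall>\<^sub>F N in sequentially. (\<Sum>n<N. a n) $ j = fps_suminf a $ j"
    unfolding eventually_sequentially by blast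
qed

lemma suminf_eq_fps_suminf: "suminf a = fps_suminf a"
  using sums_fps_suminf by (rule sums_unique[symmetric])

lemma fps_suminf_mult_left: "fps_suminf (\<lambda>n. c * a n) = c * fps_suminf a"
proof (rule fps_ext)
  fix j
  have "fps_suminf a $ (j - i) = (\<Sum>n<Suc j. a n $ (j - i))" for i
    by (rule fps_suminf_nth) simp
  then have "(c * fps_suminf a) $ j = (\<Sum>i=0..j. c $ i * (\<Sum>n<Suc j. a n $ (j - i)))"
    by (simp only: fps_mult_nth)
  also have "\<dots> = (\<Sum>n<Suc j. (c * a n) $ j)"
    unfolding fps_mult_nth sum_distrib_left by (rule sum.swap)
  finally show "fps_suminf (\<lambda>n. c * a n) $ j = (c * fps_suminf a) $ j"
    by (simp add: fps_suminf_def lessThan_Suc_atMost)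
qed

lemma fps_suminf_Suc_shift: "fps_suminf (\<lambda>n. a (Suc n)) = fps_suminf a - a 0"
proof (rule fps_ext)
  fix j
  have "fps_suminf a $ j = a 0 $ j + (\<Sum>n<Suc j. a (Suc n) $ j)"
    using fps_suminf_nth[of j "Suc (Suc j)"] by (simp only: sum.lessThan_Suc_shift)
  then show "fps_suminf (\<lambda>n. a (Suc n)) $ j = (fps_suminf a - a 0) $ j"
    by (simp add: fps_suminf_def lessThan_Suc_atMost)
qed

end

lemma fps_suminf_add:
  fixes a b :: "nat \<Rightarrow> 'a::comm_monoid_add fps"
  shows "fps_suminf (\<lambda>n. a n + b n) = fps_suminf a + fps_suminf b"
  by (rule fps_ext) (simp add: fps_suminf_def sum.distrib)

lemma fps_suminf_diff:
  fixes a b :: "nat \<Rightarrow> 'a::ab_group_add fps"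
  shows "fps_suminf (\<lambda>n. a n - b n) = fps_suminf a - fps_suminf b"
  by (rule fps_ext) (simp add: fps_suminf_def sum_subtractf)

section \<open>Sets closed under the ring operations\<close>

definition semiring_closed :: "'a::semiring_1 set \<Rightarrow> bool" where
  "semiring_closed S \<longleftrightarrow> 0 \<in> S \<and> 1 \<in> S \<and> (\<forall>x\<in>S. \<forall>y\<in>S. x + y \<in> S \<and> x * y \<in> S)"

definition ring_closed :: "'a::ring_1 set \<Rightarrow> bool" where
  "ring_closed S \<longleftrightarrow> semiring_closed S \<and> (\<forall>x\<in>S. - x \<in> S)"

context
  fixes S :: "'a::comm_semiring_1 set"
  assumes S: "semiring_closed S"
begin

lemma semiring_closed_0: "0 \<in> S"
  using S by (simp add: semiring_closed_def)

lemma semiring_closed_1: "1 \<in> S"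
  using S by (simp add: semiring_closed_def)

lemma semiring_closed_add: "x \<in> S \<Longrightarrow> y \<in> S \<Longrightarrow> x + y \<in> S"
  using S by (simp add: semiring_closed_def)

lemma semiring_closed_mult: "x \<in> S \<Longrightarrow> y \<in> S \<Longrightarrow> x * y \<in> S"
  using S by (simp add: semiring_closed_def)

lemma semiring_closed_sum: "(\<And>i. i \<in> A \<Longrightarrow> f i \<in> S) \<Longrightarrow> sum f A \<in> S"
  by (induction A rule: infinite_finite_induct)
    (auto intro: semiring_closed_0 semiring_closed_add)

lemma semiring_closed_prod: "(\<And>i. i \<in> A \<Longrightarrow> f i \<in> S) \<Longrightarrow> prod f A \<in> S"
  by (induction A rule: infinite_finite_induct)
    (auto intro: semiring_closed_1 semiring_closed_mult)

lemma semiring_closed_power: "x \<in> S \<Longrightarrow> x ^ n \<in> S"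
  by (induction n) (auto intro: semiring_closed_1 semiring_closed_mult)

end

lemma ring_closed_uminus: "ring_closed S \<Longrightarrow> x \<in> S \<Longrightarrow> - x \<in> S"
  by (simp add: ring_closed_def)

definition poly_over :: "'a::zero set \<Rightarrow> 'a poly set" where
  "poly_over S = {p. \<forall>i. coeff p i \<in> S}"

definition fps_over :: "'a set \<Rightarrow> 'a fps set" where
  "fps_over S = {F. \<forall>n. F $ n \<in> S}"

lemma semiring_closed_poly_over:
  fixes S :: "'a::comm_semiring_1 set"
  assumes "semiring_closed S"
  shows "semiring_closed (poly_over S)"
  using assms unfolding semiring_closed_def poly_over_def
  by (auto simp: coeff_1 intro: coeff_mult_semiring_closed)

lemma ring_closed_poly_over:
  fixes S :: "'a::comm_ring_1 set"
  assumes "ring_closed S"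
  shows "ring_closed (poly_over S)"
  using assms semiring_closed_poly_over[of S] unfolding ring_closed_def
  by (simp add: poly_over_def)

lemma semiring_closed_fps_over:
  fixes S :: "'a::comm_semiring_1 set"
  assumes "semiring_closed S"
  shows "semiring_closed (fps_over S)"
  using assms unfolding semiring_closed_def fps_over_def
  by (auto simp: fps_mult_nth intro!: semiring_closed_sum[OF assms])

lemma ring_closed_fps_over:
  fixes S :: "'a::comm_ring_1 set"
  assumes "ring_closed S"
  shows "ring_closed (fps_over S)"
  using assms semiring_closed_fps_over[of S] unfolding ring_closed_def
  by (simp add: fps_over_def)

lemma pCons_in_poly_over: "a \<in> S \<Longrightarrow> p \<in> poly_over S \<Longrightarrow> pCons a p \<in> poly_over S"
  by (simp add: poly_over_def coeff_pCons split: nat.split)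

lemma fps_const_in_fps_over: "0 \<in> S \<Longrightarrow> c \<in> S \<Longrightarrow> fps_const c \<in> fps_over S"
  by (simp add: fps_over_def)

lemma fps_X_in_fps_over: "0 \<in> S \<Longrightarrow> 1 \<in> S \<Longrightarrow> fps_X \<in> fps_over S"
  by (simp add: fps_over_def fps_X_def)

lemma fps_suminf_in_fps_over:
  fixes S :: "'a::comm_semiring_1 set"
  assumes "semiring_closed S" "\<And>n. a n \<in> fps_over S"
  shows "fps_suminf a \<in> fps_over S"
  using assms(2) unfolding fps_over_def fps_suminf_def by (auto intro!: semiring_closed_sum[OF assms(1)])

section \<open>Geometric series and q-Pochhammer products\<close>

definition geometric_fps :: "'a::comm_ring_1 \<Rightarrow> nat \<Rightarrow> 'a fps" where
  "geometric_fps c e = Abs_fps (\<lambda>n. if e dvd n then c ^ (n div e) else 0)"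

lemma geometric_fps_in_fps_over:
  fixes S :: "'a::comm_ring_1 set"
  shows "semiring_closed S \<Longrightarrow> c \<in> S \<Longrightarrow> geometric_fps c e \<in> fps_over S"
  unfolding fps_over_def geometric_fps_def by (auto intro: semiring_closed_0 semiring_closed_power)

lemma geometric_fps_inverse:
  assumes e: "0 < e"
  shows "(1 - fps_const c * fps_X ^ e) * geometric_fps c e = 1"
proof (rule fps_ext)
  fix n
  have "((1 - fps_const c * fps_X ^ e) * geometric_fps c e) $ n
      = geometric_fps c e $ n - c * (fps_X ^ e * geometric_fps c e) $ n"
    by (simp add: algebra_simps mult.assoc)
  also have "\<dots> = 1 $ n"
  proof (cases "n < e")
    case True
    then show ?thesis
      using e by (cases "n = 0") (auto simp: geometric_fps_def fps_X_power_mult_nth dest: dvd_imp_le)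
  next
    case False
    then obtain d where d: "n = e + d" by (metis le_Suc_ex not_less)
    have "e dvd n \<longleftrightarrow> e dvd d" using d by auto
    moreover have "e dvd d \<Longrightarrow> n div e = Suc (d div e)" using d e by auto
    ultimately show ?thesis using d e by (auto simp: geometric_fps_def fps_X_power_mult_nth)
  qed
  finally show "((1 - fps_const c * fps_X ^ e) * geometric_fps c e) $ n = 1 $ n" .
qed

lemma qpoch_0 [simp]: "qpoch A Q 0 = 1"
  by (simp add: qpoch_def)

lemma qpoch_Suc: "qpoch A Q (Suc n) = qpoch A Q n * (1 - A * Q ^ n)"
  by (simp add: qpoch_def)

lemma qpoch_nth_0: "A $ 0 = 0 \<Longrightarrow> qpoch A Q n $ 0 = 1"
  by (induction n) (simp_all add: qpoch_Suc)

lemma qpoch_fps_X_power_inverse: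
  assumes "0 < e"
  shows "qpoch (fps_X ^ e) (fps_X ^ e) m * (\<Prod>j<m. geometric_fps 1 (e * Suc j)) = 1"
proof -
  have "qpoch (fps_X ^ e) (fps_X ^ e) m * (\<Prod>j<m. geometric_fps 1 (e * Suc j))
      = (\<Prod>j<m. (1 - fps_const 1 * fps_X ^ (e * Suc j)) * geometric_fps (1::'a::comm_ring_1) (e * Suc j))"
    unfolding qpoch_def prod.distrib[symmetric]
    by (intro prod.cong refl) (simp add: power_mult[symmetric] power_add[symmetric] algebra_simps)
  also have "\<dots> = 1"
    using assms by (intro prod.neutral ballI geometric_fps_inverse) simp
  finally show ?thesis .
qed

lemma prod_lessThan_mult_residues:
  fixes f :: "nat \<Rightarrow> 'a::comm_monoid_mult"
  shows "(\<Prod>j<k * i. f j) = (\<Prod>r<k. \<Prod>s<i. f (r + k * s))"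
proof -
  have "(\<Prod>j<k * i. f j) = (\<Prod>s<i. \<Prod>j\<in>{s * k..<s * k + k}. f j)"
    by (simp add: prod.nat_group mult.commute)
  also have "\<dots> = (\<Prod>s<i. \<Prod>r<k. f (r + k * s))"
    by (simp add: prod.atLeastLessThan_shift_0 atLeast0LessThan add.commute mult.commute)
  finally show ?thesis by (rule trans) (rule prod.swap)
qed

lemma qpoch_residue_split:
  "qpoch (A * Q) Q (k * i) = (\<Prod>r<k. qpoch (A * Q ^ Suc r) (Q ^ k) i)"
  unfolding qpoch_def prod_lessThan_mult_residues[of _ k i]
  by (simp add: power_add power_mult mult.assoc)

section \<open>The q-difference system\<close>

definition qdiff_system :: "'a::comm_semiring_1 \<Rightarrow> (nat \<Rightarrow> nat \<Rightarrow> 'a) \<Rightarrow> bool" where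
  "qdiff_system Q a \<longleftrightarrow> (\<forall>m i. a m (Suc i) = a m i + Q ^ i * a (Suc m) i)"

lemma qdiff_systemD: "qdiff_system Q a \<Longrightarrow> a m (Suc i) = a m i + Q ^ i * a (Suc m) i"
  by (simp add: qdiff_system_def)

lemma qdiff_system_unique:
  fixes Q :: "'a::idom"
  assumes "Q \<noteq> 0" "qdiff_system Q a" "qdiff_system Q b" "\<And>i. a 0 i = b 0 i"
  shows "a m i = b m i"
proof (induction m arbitrary: i)
  case (Suc m)
  have "Q ^ i * a (Suc m) i = a m (Suc i) - a m i"
    using qdiff_systemD[OF assms(2)] by simp
  also have "\<dots> = b m (Suc i) - b m i"
    by (simp only: Suc)
  also have "\<dots> = Q ^ i * b (Suc m) i"
    using qdiff_systemD[OF assms(3)] by simp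
  finally show ?case using assms(1) by simp
qed (use assms(4) in simp)

lemma qdiff_system_mult_left: "qdiff_system Q a \<Longrightarrow> qdiff_system Q (\<lambda>m i. c * a m i)"
  by (simp add: qdiff_system_def algebra_simps)

lemma qdiff_system_fps_suminf:
  fixes t :: "nat \<Rightarrow> 'a::comm_ring_1 fps"
  assumes "\<And>n. vanishes_below n (t n)" "\<And>n. qdiff_system Q (W n)"
  shows "qdiff_system Q (\<lambda>m i. fps_suminf (\<lambda>n. t n * W n m i))"
  unfolding qdiff_system_def
proof (intro allI)
  fix m i
  have "fps_suminf (\<lambda>n. t n * W n m (Suc i))
      = fps_suminf (\<lambda>n. t n * W n m i + Q ^ i * (t n * W n (Suc m) i))"
    by (simp add: qdiff_systemD[OF assms(2)] algebra_simps)
  also have "\<dots> = fps_suminf (\<lambda>n. t n * W n m i) + Q ^ i * fps_suminf (\<lambda>n. t n * W n (Suc m) i)"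
    using assms(1)
    by (simp add: fps_suminf_add fps_suminf_mult_left vanishes_below_mult_right)
  finally show "fps_suminf (\<lambda>n. t n * W n m (Suc i))
      = fps_suminf (\<lambda>n. t n * W n m i) + Q ^ i * fps_suminf (\<lambda>n. t n * W n (Suc m) i)" .
qed

fun qbinomial :: "'a::comm_semiring_1 \<Rightarrow> nat \<Rightarrow> nat \<Rightarrow> 'a" where
  "qbinomial Q 0 j = (if j = 0 then 1 else 0)"
| "qbinomial Q (Suc m) j = Q ^ j * qbinomial Q m j + (if j = 0 then 0 else qbinomial Q m (j - 1))"

lemma qbinomial_eq_0: "m < j \<Longrightarrow> qbinomial Q m j = 0"
  by (induction m arbitrary: j) auto

lemma qbinomial_in:
  "semiring_closed S \<Longrightarrow> Q \<in> S \<Longrightarrow> qbinomial Q m j \<in> S"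
  by (induction m arbitrary: j)
    (auto intro: semiring_closed_0 semiring_closed_1 semiring_closed_add semiring_closed_mult
       semiring_closed_power)

(* A q-analogue of the Leibniz rule: the convolution of two solutions with Gaussian binomial
   weights is again a solution. *)
definition qdiff_conv ::
    "'a::comm_semiring_1 \<Rightarrow> (nat \<Rightarrow> nat \<Rightarrow> 'a) \<Rightarrow> (nat \<Rightarrow> nat \<Rightarrow> 'a) \<Rightarrow> nat \<Rightarrow> nat \<Rightarrow> 'a" where
  "qdiff_conv Q a b m i = (\<Sum>j\<le>m. qbinomial Q m j * a j i * b (m - j) (i + j))"

lemma qdiff_conv_0: "qdiff_conv Q a b 0 i = a 0 i * b 0 i"
  by (simp add: qdiff_conv_def)

lemma qdiff_conv_in:
  assumes "semiring_closed S" "Q \<in> S" "\<And>m i. a m i \<in> S" "\<And>m i. b m i \<in> S"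
  shows "qdiff_conv Q a b m i \<in> S"
  unfolding qdiff_conv_def using assms
  by (intro semiring_closed_sum semiring_closed_mult qbinomial_in) auto

lemma qdiff_system_conv:
  assumes a: "qdiff_system Q a" and b: "qdiff_system Q b"
  shows "qdiff_system Q (qdiff_conv Q a b)"
  unfolding qdiff_system_def
proof (intro allI)
  fix m i
  define S1 where "S1 = (\<Sum>j\<le>m. Q ^ j * qbinomial Q m j * a j i * b (Suc (m - j)) (i + j))"
  define S2 where "S2 = (\<Sum>j\<le>m. qbinomial Q m j * a (Suc j) i * b (m - j) (Suc (i + j)))"
  have "qdiff_conv Q a b m (Suc i) = (\<Sum>j\<le>m. qbinomial Q m j * a j i * b (m - j) (i + j)
          + Q ^ i * (Q ^ j * qbinomial Q m j * a j i * b (Suc (m - j)) (i + j))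
          + Q ^ i * (qbinomial Q m j * a (Suc j) i * b (m - j) (Suc (i + j))))"
    unfolding qdiff_conv_def
    by (intro sum.cong refl)
      (simp add: qdiff_systemD[OF a] qdiff_systemD[OF b] algebra_simps power_add)
  also have "\<dots> = qdiff_conv Q a b m i + Q ^ i * (S1 + S2)"
    unfolding qdiff_conv_def S1_def S2_def
    by (simp add: sum.distrib sum_distrib_left algebra_simps)
  also have "S1 + S2 = qdiff_conv Q a b (Suc m) i"
  proof -
    have "qdiff_conv Q a b (Suc m) i
        = (\<Sum>j\<le>Suc m. Q ^ j * qbinomial Q m j * a j i * b (Suc m - j) (i + j))
        + (\<Sum>j\<le>Suc m. (if j = 0 then 0 else qbinomial Q m (j - 1)) * a j i * b (Suc m - j) (i + j))"
      unfolding qdiff_conv_def by (simp add: sum.distrib algebra_simps)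
    also have "(\<Sum>j\<le>Suc m. Q ^ j * qbinomial Q m j * a j i * b (Suc m - j) (i + j)) = S1"
      unfolding S1_def by (simp add: qbinomial_eq_0 Suc_diff_le)
    also have "(\<Sum>j\<le>Suc m. (if j = 0 then 0 else qbinomial Q m (j - 1)) * a j i * b (Suc m - j) (i + j)) = S2"
      unfolding S2_def by (subst sum.atMost_Suc_shift) simp
    finally show ?thesis by simp
  qed
  finally show "qdiff_conv Q a b m (Suc i) = qdiff_conv Q a b m i + Q ^ i * qdiff_conv Q a b (Suc m) i" .
qed

lemma qdiff_system_prod:
  fixes b :: "nat \<Rightarrow> nat \<Rightarrow> nat \<Rightarrow> 'a::comm_semiring_1"
  assumes "semiring_closed S" "Q \<in> S"
    and "\<And>r. r < K \<Longrightarrow> qdiff_system Q (b r)" "\<And>r m i. r < K \<Longrightarrow> b r m i \<in> S"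
  obtains V where "qdiff_system Q V" "\<And>m i. V m i \<in> S" "\<And>i. V 0 i = (\<Prod>r<K. b r 0 i)"
  using assms(3,4)
proof (induction K arbitrary: thesis)
  case 0
  show ?case
    by (rule "0.prems"(1)[of "\<lambda>m i. if m = 0 then 1 else 0"])
      (auto simp: qdiff_system_def intro: semiring_closed_0 semiring_closed_1 assms(1))
next
  case (Suc K)
  obtain V where V: "qdiff_system Q V" "\<And>m i. V m i \<in> S" "\<And>i. V 0 i = (\<Prod>r<K. b r 0 i)"
    using Suc.IH Suc.prems(2,3) by (metis less_SucI)
  show ?case
  proof (rule Suc.prems(1))
    show "qdiff_system Q (qdiff_conv Q V (b K))"
      using V(1) Suc.prems(2) by (intro qdiff_system_conv) auto
    show "qdiff_conv Q V (b K) m i \<in> S" for m i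
      using V(2) Suc.prems(3) assms(1,2) by (intro qdiff_conv_in) auto
    show "qdiff_conv Q V (b K) 0 i = (\<Prod>r<Suc K. b r 0 i)" for i
      by (simp add: qdiff_conv_0 V(3))
  qed
qed

lemma Suc_choose_two: "Suc m choose 2 = (m choose 2) + m"
  by (simp add: numeral_2_eq_2)

lemma qdiff_system_inverse_qpoch:
  fixes Q c :: "'a::comm_ring_1"
  assumes "\<And>n. (1 - c * Q ^ n) * \<beta> (Suc n) = \<beta> n"
  shows "qdiff_system Q (\<lambda>m i. c ^ m * Q ^ (m choose 2) * \<beta> (i + m))"
  unfolding qdiff_system_def
proof (intro allI)
  fix m i
  have "\<beta> (Suc (i + m)) = \<beta> (i + m) + c * Q ^ (i + m) * \<beta> (Suc (i + m))"
    using assms[of "i + m"] by (simp add: algebra_simps)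
  then have "c ^ m * Q ^ (m choose 2) * \<beta> (Suc i + m)
      = c ^ m * Q ^ (m choose 2) * (\<beta> (i + m) + c * Q ^ (i + m) * \<beta> (Suc (i + m)))"
    by simp
  then show "c ^ m * Q ^ (m choose 2) * \<beta> (Suc i + m)
      = c ^ m * Q ^ (m choose 2) * \<beta> (i + m)
        + Q ^ i * (c ^ Suc m * Q ^ (Suc m choose 2) * \<beta> (i + Suc m))"
    by (simp add: Suc_choose_two power_add algebra_simps)
qed

lemma qdiff_system_qpoch:
  fixes Q c :: "'a::comm_ring_1"
  shows "qdiff_system Q (\<lambda>m i. c ^ m * qpoch (- c) Q i)"
  by (simp add: qdiff_system_def qpoch_Suc algebra_simps)

(* For n < m the factor s = n is Q^0 - 1 = 0 (truncated subtraction), so qfalling Q n m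
   vanishes exactly where the Gaussian binomial does. *)
definition qfalling :: "'a::comm_ring_1 \<Rightarrow> nat \<Rightarrow> nat \<Rightarrow> 'a" where
  "qfalling Q n m = (\<Prod>s<m. Q ^ (n - s) - 1)"

lemma qfalling_0 [simp]: "qfalling Q n 0 = 1"
  by (simp add: qfalling_def)

lemma qfalling_Suc: "qfalling Q n (Suc m) = qfalling Q n m * (Q ^ (n - m) - 1)"
  by (simp add: qfalling_def)

lemma qfalling_Suc_Suc: "qfalling Q (Suc n) (Suc m) = (Q ^ Suc n - 1) * qfalling Q n m"
  unfolding qfalling_def by (subst prod.lessThan_Suc_shift) simp

lemma qfalling_eq_0: "n < m \<Longrightarrow> qfalling Q n m = 0"
  unfolding qfalling_def by (rule prod_zero) (auto intro!: bexI[of _ n])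

lemma qfalling_pascal:
  "Q ^ m * qfalling Q n (Suc m) + Q ^ n * (Q ^ Suc m - 1) * qfalling Q n m
    = Q ^ m * qfalling Q (Suc n) (Suc m)"
proof (cases "m \<le> n")
  case True
  then have "Q ^ n = Q ^ m * Q ^ (n - m)"
    by (simp flip: power_add)
  then show ?thesis
    unfolding qfalling_Suc_Suc qfalling_Suc[of Q n m] by (simp add: algebra_simps)
qed (simp add: qfalling_eq_0 qfalling_Suc_Suc)

(* The q-binomial theorem, phrased through the recurrences of c n m = [z^m] (z;Q)_n. *)
lemma qpoch_mult_eq_qfalling:
  fixes c :: "nat \<Rightarrow> nat \<Rightarrow> 'a::comm_ring_1"
  assumes c0: "\<And>m. c 0 m = (if m = 0 then 1 else 0)"
    and c_Suc_0: "\<And>n. c (Suc n) 0 = c n 0"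
    and c_Suc_Suc: "\<And>n m. c (Suc n) (Suc m) = c n (Suc m) - Q ^ n * c n m"
  shows "qpoch Q Q m * c n m = Q ^ (m choose 2) * qfalling Q n m"
proof (induction n arbitrary: m)
  case 0
  then show ?case by (cases m) (simp_all add: c0 qfalling_eq_0 numeral_2_eq_2)
next
  case (Suc n)
  show ?case
  proof (cases m)
    case 0
    then show ?thesis using Suc.IH[of 0] by (simp add: c_Suc_0 numeral_2_eq_2)
  next
    case (Suc m')
    have "qpoch Q Q (Suc m') * c (Suc n) (Suc m')
        = qpoch Q Q (Suc m') * c n (Suc m') + Q ^ n * (Q ^ Suc m' - 1) * (qpoch Q Q m' * c n m')"
      by (simp add: c_Suc_Suc qpoch_Suc algebra_simps)
    also have "\<dots> = Q ^ (m' choose 2) * (Q ^ m' * qfalling Q n (Suc m')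
        + Q ^ n * (Q ^ Suc m' - 1) * qfalling Q n m')"
      by (simp only: Suc.IH) (simp add: Suc_choose_two power_add algebra_simps)
    also have "\<dots> = Q ^ (Suc m' choose 2) * qfalling Q (Suc n) (Suc m')"
      by (simp only: Suc_choose_two power_add mult.assoc flip: qfalling_pascal)
    finally show ?thesis using Suc by simp
  qed
qed

definition qfalling_shift :: "'a::comm_ring_1 \<Rightarrow> nat \<Rightarrow> nat \<Rightarrow> nat \<Rightarrow> 'a" where
  "qfalling_shift Q n m i = Q ^ (i * (n - m)) * qfalling Q n m"

lemma qdiff_system_qfalling_shift: "qdiff_system Q (qfalling_shift Q n)"
  unfolding qdiff_system_def
proof (intro allI)
  fix m i
  show "qfalling_shift Q n m (Suc i) = qfalling_shift Q n m i + Q ^ i * qfalling_shift Q n (Suc m) i"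
  proof (cases "m < n")
    case True
    then obtain d where d: "n = Suc (m + d)" using less_imp_Suc_add by blast
    then show ?thesis
      by (simp add: qfalling_shift_def qfalling_Suc power_add algebra_simps)
  next
    case False
    then show ?thesis
      by (cases "m = n") (simp_all add: qfalling_shift_def qfalling_Suc qfalling_eq_0)
  qed
qed

lemma mult_qdiff_system_eq_fps_suminf:
  fixes Q :: "'a::idom fps"
  assumes "Q \<noteq> 0" "qdiff_system Q V" "\<And>n. vanishes_below n (t n)"
    and "\<And>i. P * V 0 i = fps_suminf (\<lambda>n. t n * Q ^ (i * n))"
  shows "P * V m i = fps_suminf (\<lambda>n. t n * qfalling_shift Q n m i)"
proof (rule qdiff_system_unique[OF assms(1)])
  show "qdiff_system Q (\<lambda>m i. P * V m i)"
    using assms(2) by (rule qdiff_system_mult_left)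
  show "qdiff_system Q (\<lambda>m i. fps_suminf (\<lambda>n. t n * qfalling_shift Q n m i))"
    using assms(3) qdiff_system_qfalling_shift by (rule qdiff_system_fps_suminf)
  show "P * V 0 i = fps_suminf (\<lambda>n. t n * qfalling_shift Q n 0 i)" for i
    by (simp add: assms(4) qfalling_shift_def)
qed

section \<open>Euler's identities\<close>

definition sum_X_power :: "(nat \<Rightarrow> 'a::comm_ring_1 fps) \<Rightarrow> nat \<Rightarrow> 'a fps" where
  "sum_X_power t b = fps_suminf (\<lambda>n. t n * fps_X ^ (b * n))"

context
  fixes t :: "nat \<Rightarrow> 'a::comm_ring_1 fps"
  assumes vanishing: "\<And>n. vanishes_below n (t n)"
begin

lemma vanishes_below_mult_X_power: "vanishes_below n (t n * fps_X ^ (b * n))"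
  using vanishing by (rule vanishes_below_mult_right)

lemma sum_X_power_diff:
  assumes "\<And>n. t (Suc n) * (1 - fps_X ^ Suc n) = c * fps_X ^ (e * n) * t n"
  shows "sum_X_power t b - sum_X_power t (Suc b) = c * fps_X ^ b * sum_X_power t (b + e)"
proof -
  define d where "d n = t n * fps_X ^ (b * n) - t n * fps_X ^ (Suc b * n)" for n
  have d_vanishing: "vanishes_below n (d n)" for n
    unfolding d_def by (intro vanishes_below_diff vanishes_below_mult_X_power)
  have d_Suc: "d (Suc n) = (c * fps_X ^ b) * (t n * fps_X ^ ((b + e) * n))" for n
  proof -
    have "d (Suc n) = fps_X ^ (b * Suc n) * (t (Suc n) * (1 - fps_X ^ Suc n))"
      unfolding d_def by (simp add: power_add algebra_simps)
    also have "\<dots> = (c * fps_X ^ b) * (t n * fps_X ^ ((b + e) * n))"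
      by (simp only: assms) (simp add: power_add algebra_simps)
    finally show ?thesis .
  qed
  have "sum_X_power t b - sum_X_power t (Suc b) = fps_suminf d"
    unfolding sum_X_power_def d_def by (simp add: fps_suminf_diff)
  also have "\<dots> = fps_suminf (\<lambda>n. d (Suc n))"
    using fps_suminf_Suc_shift[OF d_vanishing] by (simp add: d_def[of 0])
  also have "\<dots> = c * fps_X ^ b * sum_X_power t (b + e)"
    unfolding d_Suc sum_X_power_def
    by (rule fps_suminf_mult_left) (rule vanishes_below_mult_X_power)
  finally show ?thesis .
qed

lemma sum_X_power_nth_0: "sum_X_power t b $ 0 = t 0 $ 0"
  unfolding sum_X_power_def using fps_suminf_nth[OF vanishes_below_mult_X_power, of 0 1]
  by simp

lemma vanishes_below_sum_X_power: "t 0 = 1 \<Longrightarrow> vanishes_below b (sum_X_power t b - 1)"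
  unfolding vanishes_below_def
proof (intro allI impI)
  fix j assume t0: "t 0 = 1" and j: "j < b"
  have "(t (Suc n) * fps_X ^ (b * Suc n)) $ j = 0" for n
    using vanishes_below_fps_X_power[of b "b * Suc n"] j
    by (intro vanishes_below_mult_left[unfolded vanishes_below_def, rule_format]) auto
  then have "sum_X_power t b $ j = 1 $ j"
    unfolding sum_X_power_def
    using fps_suminf_nth[OF vanishes_below_mult_X_power, of j "Suc j"] t0
    by (simp only: sum.lessThan_Suc_shift) simp
  then show "(sum_X_power t b - 1) $ j = 0" by simp
qed

end

lemma finv_mult: "F $ 0 = 1 \<Longrightarrow> F * finv F = 1"
  unfolding finv_def by (rule fps_right_inverse) simp

lemma finv_unique: "F $ 0 = 1 \<Longrightarrow> F * G = 1 \<Longrightarrow> finv F = G"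
  using finv_mult[of F] by (metis mult.left_commute mult.right_neutral)

lemma finv_1: "finv 1 = 1"
  by (rule finv_unique) simp_all

lemma finv_qpoch_q: "finv (qpoch vq vq n) = (\<Prod>j<n. geometric_fps 1 (Suc j))"
  using qpoch_fps_X_power_inverse[of 1 n]
  by (intro finv_unique) (simp_all add: vq_def qpoch_nth_0)

lemma finv_qpoch_q_Suc: "finv (qpoch vq vq (Suc n)) * (1 - fps_X ^ Suc n) = finv (qpoch vq vq n)"
proof -
  have "geometric_fps 1 (Suc n) * (1 - fps_X ^ Suc n) = (1 :: ser)"
    using geometric_fps_inverse[of "Suc n" 1] by (simp add: mult.commute)
  then show ?thesis by (simp add: finv_qpoch_q mult.assoc)
qed

definition series1_weight :: "nat \<Rightarrow> ser" where
  "series1_weight n = (-1) ^ n * vy ^ n * vq ^ (n * (n + 1) div 2) * finv (qpoch vq vq n)"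

definition series2_weight :: "nat \<Rightarrow> ser" where
  "series2_weight n = (-1) ^ n * vy ^ n * vq ^ n * finv (qpoch vq vq n)"

lemma series1_weight_0: "series1_weight 0 = 1" and series2_weight_0: "series2_weight 0 = 1"
  by (simp_all add: series1_weight_def series2_weight_def finv_1)

lemma vanishes_below_series1_weight: "vanishes_below n (series1_weight n)"
proof -
  have "n * 2 \<le> n * (n + 1)" by (cases n) auto
  then have "vanishes_below n (vq ^ (n * (n + 1) div 2))"
    unfolding vq_def by (intro vanishes_below_fps_X_power) linarith
  then show ?thesis
    unfolding series1_weight_def by (intro vanishes_below_mult_right vanishes_below_mult_left)
qed

lemma vanishes_below_series2_weight: "vanishes_below n (series2_weight n)"
  unfolding series2_weight_def vq_def
  by (intro vanishes_below_mult_right vanishes_below_mult_left vanishes_below_fps_X_power) simp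

(* The exponents 1 * n and 0 * n match the shape required by sum_X_power_diff. *)
lemma series1_weight_Suc:
  "series1_weight (Suc n) * (1 - fps_X ^ Suc n) = (- vy * fps_X) * fps_X ^ (1 * n) * series1_weight n"
proof -
  have "Suc n * (Suc n + 1) div 2 = n * (n + 1) div 2 + Suc n" by simp
  then show ?thesis
    unfolding series1_weight_def
    by (simp add: mult.assoc finv_qpoch_q_Suc flip: finv_qpoch_q_Suc[of n])
      (simp add: vq_def power_add algebra_simps)
qed

lemma series2_weight_Suc:
  "series2_weight (Suc n) * (1 - fps_X ^ Suc n) = (- vy * fps_X) * fps_X ^ (0 * n) * series2_weight n"
  unfolding series2_weight_def
  by (simp add: mult.assoc finv_qpoch_q_Suc flip: finv_qpoch_q_Suc[of n])
    (simp add: vq_def algebra_simps)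

lemma sum_X_power_series1_weight_nth_0: "sum_X_power series1_weight b $ 0 = 1"
  and sum_X_power_series2_weight_nth_0: "sum_X_power series2_weight b $ 0 = 1"
  by (simp_all add: sum_X_power_nth_0 vanishes_below_series1_weight vanishes_below_series2_weight
      series1_weight_0 series2_weight_0)

lemma qpoch_y_mult_sum_X_power_series1_weight:
  "qpoch (vy * vq) vq N * sum_X_power series1_weight N = sum_X_power series1_weight 0"
proof (induction N)
  case (Suc N)
  have "sum_X_power series1_weight N = (1 - vy * vq * vq ^ N) * sum_X_power series1_weight (Suc N)"
    using sum_X_power_diff[OF vanishes_below_series1_weight series1_weight_Suc, of N]
    by (simp add: vq_def algebra_simps)
  then show ?case
    using Suc.IH by (simp add: qpoch_Suc mult.assoc)
qed simp

lemma qpoch_neg_y_mult_sum_X_power_series2_weight: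
  "qpoch (- (vy * vq)) vq N * sum_X_power series2_weight 0 = sum_X_power series2_weight N"
proof (induction N)
  case (Suc N)
  have "sum_X_power series2_weight (Suc N) = (1 + vy * vq * vq ^ N) * sum_X_power series2_weight N"
    using sum_X_power_diff[OF vanishes_below_series2_weight series2_weight_Suc, of N]
    by (simp add: vq_def algebra_simps)
  then show ?case
    using Suc.IH by (simp add: qpoch_Suc algebra_simps)
qed simp

lemma qpoch_inf_y: "qpoch_inf (vy * vq) vq = sum_X_power series1_weight 0"
  unfolding qpoch_inf_def
proof (rule limI, rule tendsto_fps_vanishes_below)
  fix N
  have "qpoch (vy * vq) vq N - sum_X_power series1_weight 0
      = qpoch (vy * vq) vq N * (sum_X_power series1_weight N - 1) * (- 1)"
    by (simp flip: qpoch_y_mult_sum_X_power_series1_weight[of N] add: algebra_simps)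
  then show "vanishes_below N (qpoch (vy * vq) vq N - sum_X_power series1_weight 0)"
    using vanishes_below_sum_X_power[OF vanishes_below_series1_weight series1_weight_0]
    by (simp only: vanishes_below_mult_left vanishes_below_mult_right)
qed

lemma qpoch_inf_neg_y: "qpoch_inf (- (vy * vq)) vq = finv (sum_X_power series2_weight 0)"
  unfolding qpoch_inf_def
proof (rule limI, rule tendsto_fps_vanishes_below)
  fix N
  have "sum_X_power series2_weight 0 * finv (sum_X_power series2_weight 0) = 1"
    by (rule finv_mult[OF sum_X_power_series2_weight_nth_0])
  then have "qpoch (- (vy * vq)) vq N - finv (sum_X_power series2_weight 0)
      = (sum_X_power series2_weight N - 1) * finv (sum_X_power series2_weight 0)"
    by (simp flip: qpoch_neg_y_mult_sum_X_power_series2_weight[of N] add: algebra_simps)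
  then show "vanishes_below N (qpoch (- (vy * vq)) vq N - finv (sum_X_power series2_weight 0))"
    using vanishes_below_sum_X_power[OF vanishes_below_series2_weight series2_weight_0]
    by (simp only: vanishes_below_mult_right)
qed

section \<open>Coefficients of z\<close>

definition nonneg_ser :: "ser set" where
  "nonneg_ser = fps_over (poly_over (poly_over {0..}))"

definition zfree_ser :: "ser set" where
  "zfree_ser = fps_over (poly_over (range (\<lambda>c. [:c:])))"

lemma semiring_closed_nonneg_poly_poly: "semiring_closed (poly_over (poly_over {0::int..}))"
  by (intro semiring_closed_poly_over) (simp add: semiring_closed_def)

lemma semiring_closed_nonneg_ser: "semiring_closed nonneg_ser"
  unfolding nonneg_ser_def by (rule semiring_closed_fps_over[OF semiring_closed_nonneg_poly_poly])

lemma geometric_fps_in_nonneg_ser: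
  "c \<in> poly_over (poly_over {0..}) \<Longrightarrow> geometric_fps c e \<in> nonneg_ser"
  unfolding nonneg_ser_def by (rule geometric_fps_in_fps_over[OF semiring_closed_nonneg_poly_poly])

lemma y_in_nonneg_poly_poly: "[:0, 1:] \<in> poly_over (poly_over {0::int..})"
  by (intro pCons_in_poly_over) (simp_all add: poly_over_def coeff_1)

lemma ring_closed_const_poly: "ring_closed (range (\<lambda>c::'a::comm_ring_1. [:c:]))"
  unfolding ring_closed_def semiring_closed_def
  by (auto simp: image_iff one_pCons intro: exI[of _ 0])

lemma semiring_closed_const_coeff_polys: "semiring_closed (poly_over (range (\<lambda>c::int. [:c:])))"
  using ring_closed_poly_over[OF ring_closed_const_poly[where 'a = int]] by (simp add: ring_closed_def)

lemma ring_closed_zfree_ser: "ring_closed zfree_ser"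
  unfolding zfree_ser_def
  by (intro ring_closed_fps_over ring_closed_poly_over ring_closed_const_poly)

lemma semiring_closed_zfree_ser: "semiring_closed zfree_ser"
  using ring_closed_zfree_ser by (simp add: ring_closed_def)

lemma geometric_fps_1_in_zfree_ser: "geometric_fps 1 e \<in> zfree_ser"
  unfolding zfree_ser_def
  by (intro geometric_fps_in_fps_over semiring_closed_1 semiring_closed_const_coeff_polys)

lemma fps_suminf_in_zfree_ser: "(\<And>n. a n \<in> zfree_ser) \<Longrightarrow> fps_suminf a \<in> zfree_ser"
  unfolding zfree_ser_def by (rule fps_suminf_in_fps_over[OF semiring_closed_const_coeff_polys])

lemma vy_in_nonneg_ser: "vy \<in> nonneg_ser"
  unfolding vy_def nonneg_ser_def
  by (intro fps_const_in_fps_over y_in_nonneg_poly_poly semiring_closed_0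
      semiring_closed_nonneg_poly_poly)

lemma vq_in_nonneg_ser: "vq \<in> nonneg_ser"
  unfolding vq_def nonneg_ser_def
  by (intro fps_X_in_fps_over semiring_closed_0 semiring_closed_1 semiring_closed_nonneg_poly_poly)

lemma vy_in_zfree_ser: "vy \<in> zfree_ser"
  unfolding vy_def zfree_ser_def
  by (intro fps_const_in_fps_over pCons_in_poly_over)
    (auto simp: poly_over_def image_iff one_pCons intro: exI[of _ 0])

lemma vq_in_zfree_ser: "vq \<in> zfree_ser"
  unfolding vq_def zfree_ser_def
  by (intro fps_X_in_fps_over semiring_closed_0 semiring_closed_1 semiring_closed_const_coeff_polys)

lemma fps_X_power_in_nonneg_ser: "fps_X ^ e \<in> nonneg_ser"
  using vq_in_nonneg_ser by (simp add: vq_def semiring_closed_power[OF semiring_closed_nonneg_ser])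

lemma fps_X_power_in_zfree_ser: "fps_X ^ e \<in> zfree_ser"
  using vq_in_zfree_ser by (simp add: vq_def semiring_closed_power[OF semiring_closed_zfree_ser])

definition zcoeff :: "nat \<Rightarrow> ser \<Rightarrow> ser" where
  "zcoeff m F = Abs_fps (\<lambda>n. map_poly (\<lambda>c. [:coeff c m:]) (F $ n))"

lemma coeff_zcoeff_nth [simp]: "coeff (zcoeff m F $ n) l = [:coeff (coeff (F $ n) l) m:]"
  by (simp add: zcoeff_def coeff_map_poly)

lemma zcoeff_diff: "zcoeff m (F - G) = zcoeff m F - zcoeff m G"
  by (rule fps_ext, rule poly_eqI) simp

lemma zcoeff_1: "zcoeff m 1 = (if m = 0 then 1 else 0)"
  by (rule fps_ext, rule poly_eqI) (auto simp: coeff_1 coeff_pCons split: nat.split)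

lemma zcoeff_vz_mult_0: "zcoeff 0 (vz * F) = 0"
  and zcoeff_vz_mult_Suc: "zcoeff (Suc m) (vz * F) = zcoeff m F"
  by (rule fps_ext, rule poly_eqI, simp add: vz_def)+

lemma zcoeff_fps_suminf: "zcoeff m (fps_suminf a) = fps_suminf (\<lambda>n. zcoeff m (a n))"
  by (rule fps_ext, rule poly_eqI)
    (simp only: coeff_zcoeff_nth fps_suminf_def fps_nth_Abs_fps coeff_sum sum_to_poly)

lemma zcoeff_mult:
  assumes "F \<in> zfree_ser"
  shows "zcoeff m (F * G) = F * zcoeff m G"
proof (rule fps_ext, rule poly_eqI)
  fix n l
  define c where "c i a = coeff (coeff (F $ i) a) 0" for i a
  have F_coeff: "coeff (F $ i) a = [:c i a:]" for i a
  proof -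
    have "coeff (F $ i) a \<in> range (\<lambda>c. [:c:])"
      using assms by (simp add: zfree_ser_def fps_over_def poly_over_def)
    then show ?thesis by (auto simp: c_def)
  qed
  show "coeff (zcoeff m (F * G) $ n) l = coeff ((F * zcoeff m G) $ n) l"
    by (simp add: fps_mult_nth coeff_mult coeff_sum sum_to_poly F_coeff mult.commute)
qed

lemma coeff_yzq_nonneg: "zcoeff m F \<in> nonneg_ser \<Longrightarrow> 0 \<le> coeff_yzq F l m n"
proof -
  assume "zcoeff m F \<in> nonneg_ser"
  then have "coeff (coeff (zcoeff m F $ n) l) 0 \<in> {0..}"
    unfolding nonneg_ser_def fps_over_def poly_over_def by blast
  then show ?thesis by (simp add: coeff_yzq_def)
qed

lemma qpoch_mult_zcoeff_qpoch_vz: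
  assumes "Q \<in> zfree_ser"
  shows "qpoch Q Q m * zcoeff m (qpoch vz Q n) = Q ^ (m choose 2) * qfalling Q n m"
proof (rule qpoch_mult_eq_qfalling)
  have Suc: "qpoch vz Q (Suc n) = qpoch vz Q n - vz * (Q ^ n * qpoch vz Q n)" for n
    by (simp add: qpoch_Suc algebra_simps)
  have "Q ^ n \<in> zfree_ser" for n
    using assms by (intro semiring_closed_power semiring_closed_zfree_ser)
  then show "zcoeff (Suc m) (qpoch vz Q (Suc n))
      = zcoeff (Suc m) (qpoch vz Q n) - Q ^ n * zcoeff m (qpoch vz Q n)" for n m
    by (simp add: Suc zcoeff_diff zcoeff_vz_mult_Suc zcoeff_mult)
  show "zcoeff 0 (qpoch vz Q (Suc n)) = zcoeff 0 (qpoch vz Q n)" for n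
    by (simp add: Suc zcoeff_diff zcoeff_vz_mult_0)
qed (simp add: zcoeff_1)

section \<open>Nonnegativity\<close>

lemma qpoch_mult_zcoeff_eq_qdiff_system:
  fixes k :: nat and t :: "nat \<Rightarrow> ser" and P F :: ser and V :: "nat \<Rightarrow> nat \<Rightarrow> ser"
  defines "Q \<equiv> fps_X ^ k :: ser"
  assumes t: "\<And>n. vanishes_below n (t n)" "\<And>n. t n \<in> zfree_ser"
    and P: "P \<in> zfree_ser" "P $ 0 = 1"
    and V: "qdiff_system Q V" and V_0: "\<And>i. P * V 0 i = sum_X_power t (k * i)"
    and F: "P * F = fps_suminf (\<lambda>n. t n * qpoch vz Q n)"
  shows "qpoch Q Q m * zcoeff m F = Q ^ (m choose 2) * V m 0"
proof -
  have PV: "P * V m 0 = fps_suminf (\<lambda>n. t n * qfalling_shift Q n m 0)"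
  proof (rule mult_qdiff_system_eq_fps_suminf[OF _ V t(1)])
    show "Q \<noteq> 0" by (simp add: Q_def fps_X_neq_zero)
    show "P * V 0 i = fps_suminf (\<lambda>n. t n * Q ^ (i * n))" for i
      by (simp add: V_0 sum_X_power_def Q_def mult.assoc flip: power_mult)
  qed
  have "P * (qpoch Q Q m * zcoeff m F) = qpoch Q Q m * zcoeff m (P * F)"
    by (simp add: zcoeff_mult[OF P(1)] mult.left_commute)
  also have "zcoeff m (P * F) = fps_suminf (\<lambda>n. t n * zcoeff m (qpoch vz Q n))"
    by (simp add: F zcoeff_fps_suminf zcoeff_mult t(2))
  also have "qpoch Q Q m * \<dots> = fps_suminf (\<lambda>n. qpoch Q Q m * (t n * zcoeff m (qpoch vz Q n)))"
    using t(1) by (intro fps_suminf_mult_left[symmetric] vanishes_below_mult_right)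
  also have "\<dots> = fps_suminf (\<lambda>n. Q ^ (m choose 2) * (t n * qfalling_shift Q n m 0))"
    by (simp add: mult.left_commute qpoch_mult_zcoeff_qpoch_vz fps_X_power_in_zfree_ser Q_def
        qfalling_shift_def)
  also have "\<dots> = Q ^ (m choose 2) * fps_suminf (\<lambda>n. t n * qfalling_shift Q n m 0)"
    using t(1) by (intro fps_suminf_mult_left vanishes_below_mult_right)
  also have "\<dots> = P * (Q ^ (m choose 2) * V m 0)"
    by (simp add: PV mult.left_commute)
  finally have "P * (qpoch Q Q m * zcoeff m F) = P * (Q ^ (m choose 2) * V m 0)" .
  moreover have "P \<noteq> 0"
    using P(2) by auto
  ultimately show ?thesis
    by simp
qed

lemma zcoeff_nonneg_if_qdiff_system:
  fixes t :: "nat \<Rightarrow> ser" and P F :: ser and V :: "nat \<Rightarrow> nat \<Rightarrow> ser"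
  assumes k: "0 < k"
    and t: "\<And>n. vanishes_below n (t n)" "\<And>n. t n \<in> zfree_ser"
    and P: "P \<in> zfree_ser" "P $ 0 = 1"
    and V: "qdiff_system (fps_X ^ k) V" "\<And>m i. V m i \<in> nonneg_ser"
    and V_0: "\<And>i. P * V 0 i = sum_X_power t (k * i)"
    and F: "P * F = fps_suminf (\<lambda>n. t n * qpoch vz (fps_X ^ k) n)"
  shows "zcoeff m F \<in> nonneg_ser"
proof -
  define Q :: ser where "Q = fps_X ^ k"
  define I where "I = (\<Prod>j<m. geometric_fps 1 (k * Suc j) :: ser)"
  have "zcoeff m F = (I * qpoch Q Q m) * zcoeff m F"
    using qpoch_fps_X_power_inverse[OF k, of m, where 'a = "int poly poly"]
    by (simp add: I_def Q_def mult.commute)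
  also have "\<dots> = I * (Q ^ (m choose 2) * V m 0)"
    unfolding mult.assoc Q_def
    by (subst qpoch_mult_zcoeff_eq_qdiff_system[OF t P V(1) V_0 F]) (rule refl)
  also have "\<dots> \<in> nonneg_ser"
    unfolding I_def Q_def using V(2)
    by (intro semiring_closed_mult[OF semiring_closed_nonneg_ser]
        semiring_closed_power[OF semiring_closed_nonneg_ser]
        semiring_closed_prod[OF semiring_closed_nonneg_ser] geometric_fps_in_nonneg_ser
        semiring_closed_1[OF semiring_closed_nonneg_poly_poly] fps_X_power_in_nonneg_ser)
  finally show ?thesis .
qed

lemma series1_weight_in_zfree_ser: "series1_weight n \<in> zfree_ser"
  and series2_weight_in_zfree_ser: "series2_weight n \<in> zfree_ser"
  unfolding series1_weight_def series2_weight_def finv_qpoch_q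
  by (intro semiring_closed_mult[OF semiring_closed_zfree_ser]
      semiring_closed_power[OF semiring_closed_zfree_ser]
      semiring_closed_prod[OF semiring_closed_zfree_ser]
      ring_closed_uminus[OF ring_closed_zfree_ser] semiring_closed_1[OF semiring_closed_zfree_ser]
      vy_in_zfree_ser vq_in_zfree_ser geometric_fps_1_in_zfree_ser)+

lemma sum_X_power_in_zfree_ser: "(\<And>n. t n \<in> zfree_ser) \<Longrightarrow> sum_X_power t b \<in> zfree_ser"
  unfolding sum_X_power_def
  by (intro fps_suminf_in_zfree_ser semiring_closed_mult[OF semiring_closed_zfree_ser]
      semiring_closed_power[OF semiring_closed_zfree_ser] vq_in_zfree_ser[unfolded vq_def])

lemma series1_eq:
  "sum_X_power series1_weight 0 * series1 k = fps_suminf (\<lambda>n. series1_weight n * qpoch vz (fps_X ^ k) n)"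
proof -
  have "sum_X_power series1_weight 0 * finv (sum_X_power series1_weight 0) = 1"
    by (rule finv_mult[OF sum_X_power_series1_weight_nth_0])
  moreover have "vanishes_below n (series1_weight n * qpoch vz (fps_X ^ k) n)" for n
    by (intro vanishes_below_mult_right vanishes_below_series1_weight)
  ultimately show ?thesis
    unfolding series1_def qpoch_inf_y
    by (simp add: suminf_eq_fps_suminf series1_weight_def vq_def mult_ac)
qed

lemma series2_eq:
  "sum_X_power series2_weight 0 * series2 k = fps_suminf (\<lambda>n. series2_weight n * qpoch vz (fps_X ^ k) n)"
proof -
  have "sum_X_power series2_weight 0 * finv (sum_X_power series2_weight 0) = 1"
    by (rule finv_mult[OF sum_X_power_series2_weight_nth_0])
  moreover have "vanishes_below n (series2_weight n * qpoch vz (fps_X ^ k) n)" for n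
    by (intro vanishes_below_mult_right vanishes_below_series2_weight)
  ultimately show ?thesis
    unfolding series2_def qpoch_inf_neg_y
    by (simp add: suminf_eq_fps_suminf series2_weight_def vq_def mult_ac)
qed

definition inv_qpoch_y :: "nat \<Rightarrow> nat \<Rightarrow> nat \<Rightarrow> ser" where
  "inv_qpoch_y k r n = (\<Prod>s<n. geometric_fps [:0, 1:] (Suc r + k * s))"

lemma inv_qpoch_y_Suc:
  "(1 - vy * fps_X ^ Suc r * (fps_X ^ k) ^ n) * inv_qpoch_y k r (Suc n) = inv_qpoch_y k r n"
proof -
  define e where "e = Suc r + k * n"
  have "vy * fps_X ^ Suc r * (fps_X ^ k) ^ n = fps_const [:0, 1:] * fps_X ^ e"
    by (simp add: vy_def e_def power_add power_mult mult.assoc)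
  then have "(1 - vy * fps_X ^ Suc r * (fps_X ^ k) ^ n) * inv_qpoch_y k r (Suc n)
      = inv_qpoch_y k r n * ((1 - fps_const [:0, 1:] * fps_X ^ e) * geometric_fps [:0, 1:] e)"
    by (simp only: inv_qpoch_y_def prod.lessThan_Suc e_def mult_ac)
  moreover have "(1 - fps_const [:0, 1:] * fps_X ^ e) * geometric_fps [:0, 1:] e = (1 :: ser)"
    by (rule geometric_fps_inverse) (simp add: e_def)
  ultimately show ?thesis
    by simp
qed

lemma qpoch_mult_inv_qpoch_y: "qpoch (vy * fps_X ^ Suc r) (fps_X ^ k) i * inv_qpoch_y k r i = 1"
proof (induction i)
  case (Suc i)
  have "qpoch (vy * fps_X ^ Suc r) (fps_X ^ k) (Suc i) * inv_qpoch_y k r (Suc i)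
      = qpoch (vy * fps_X ^ Suc r) (fps_X ^ k) i
        * ((1 - vy * fps_X ^ Suc r * (fps_X ^ k) ^ i) * inv_qpoch_y k r (Suc i))"
    by (simp only: qpoch_Suc mult.assoc)
  then show ?case
    by (simp only: inv_qpoch_y_Suc Suc.IH)
qed (simp add: inv_qpoch_y_def)

lemma inv_qpoch_y_in_nonneg_ser: "inv_qpoch_y k r n \<in> nonneg_ser"
  unfolding inv_qpoch_y_def
  by (intro semiring_closed_prod[OF semiring_closed_nonneg_ser] geometric_fps_in_nonneg_ser
      y_in_nonneg_poly_poly)

lemma sum_X_power_series1_weight_mult_inv_qpoch_y:
  "sum_X_power series1_weight 0 * (\<Prod>r<k. inv_qpoch_y k r i) = sum_X_power series1_weight (k * i)"
proof -
  have "qpoch (vy * vq) vq (k * i) = (\<Prod>r<k. qpoch (vy * fps_X ^ Suc r) (fps_X ^ k) i)"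
    unfolding vq_def by (rule qpoch_residue_split)
  then have "qpoch (vy * vq) vq (k * i) * (\<Prod>r<k. inv_qpoch_y k r i) = 1"
    by (simp only: qpoch_mult_inv_qpoch_y prod.neutral_const flip: prod.distrib)
  moreover have "sum_X_power series1_weight 0 * (\<Prod>r<k. inv_qpoch_y k r i)
      = sum_X_power series1_weight (k * i) * (qpoch (vy * vq) vq (k * i) * (\<Prod>r<k. inv_qpoch_y k r i))"
    by (subst qpoch_y_mult_sum_X_power_series1_weight[of "k * i", symmetric]) (simp only: mult_ac)
  ultimately show ?thesis
    by simp
qed

lemma series1_zcoeff_nonneg:
  assumes k: "0 < k"
  shows "zcoeff m (series1 k) \<in> nonneg_ser"
proof -
  define Q :: ser where "Q = fps_X ^ k"
  define b where "b r m i = (vy * fps_X ^ Suc r) ^ m * Q ^ (m choose 2) * inv_qpoch_y k r (i + m)"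
    for r m i
  have Q: "Q \<in> nonneg_ser"
    unfolding Q_def by (rule fps_X_power_in_nonneg_ser)
  have b_system: "qdiff_system Q (b r)" for r
    unfolding b_def Q_def using inv_qpoch_y_Suc by (rule qdiff_system_inverse_qpoch)
  have b_nonneg: "b r m i \<in> nonneg_ser" for r m i
    unfolding b_def Q_def
    by (intro semiring_closed_mult[OF semiring_closed_nonneg_ser]
        semiring_closed_power[OF semiring_closed_nonneg_ser] vy_in_nonneg_ser
        fps_X_power_in_nonneg_ser inv_qpoch_y_in_nonneg_ser)
  obtain V where V: "qdiff_system Q V" "\<And>m i. V m i \<in> nonneg_ser"
    and V_0: "\<And>i. V 0 i = (\<Prod>r<k. b r 0 i)"
    by (rule qdiff_system_prod[OF semiring_closed_nonneg_ser Q, where K = k and b = b,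
          OF b_system b_nonneg]) (rule that)
  have "V 0 i = (\<Prod>r<k. inv_qpoch_y k r i)" for i
    by (simp add: V_0 b_def numeral_2_eq_2)
  then have P_V_0: "sum_X_power series1_weight 0 * V 0 i = sum_X_power series1_weight (k * i)" for i
    by (simp only: sum_X_power_series1_weight_mult_inv_qpoch_y)
  show ?thesis
    by (rule zcoeff_nonneg_if_qdiff_system[OF k vanishes_below_series1_weight
          series1_weight_in_zfree_ser sum_X_power_in_zfree_ser[OF series1_weight_in_zfree_ser]
          sum_X_power_series1_weight_nth_0 V(1)[unfolded Q_def] V(2) P_V_0 series1_eq])
qed

lemma series2_zcoeff_nonneg:
  assumes k: "0 < k"
  shows "zcoeff m (series2 k) \<in> nonneg_ser"
proof -
  define Q :: ser where "Q = fps_X ^ k"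
  define c :: "nat \<Rightarrow> ser" where "c r = vy * fps_X ^ Suc r" for r
  define b where "b r m i = c r ^ m * qpoch (- c r) Q i" for r m i
  have Q: "Q \<in> nonneg_ser"
    unfolding Q_def by (rule fps_X_power_in_nonneg_ser)
  have b_system: "qdiff_system Q (b r)" for r
    unfolding b_def by (rule qdiff_system_qpoch)
  have c: "c r \<in> nonneg_ser" for r
    unfolding c_def
    by (intro semiring_closed_mult[OF semiring_closed_nonneg_ser] vy_in_nonneg_ser
        fps_X_power_in_nonneg_ser)
  have b_nonneg: "b r m i \<in> nonneg_ser" for r m i
  proof -
    have "b r m i = c r ^ m * (\<Prod>j<i. 1 + c r * Q ^ j)"
      by (simp add: b_def qpoch_def)
    then show ?thesis
      using Q c
      by (simp only:) (intro semiring_closed_mult[OF semiring_closed_nonneg_ser]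
          semiring_closed_power[OF semiring_closed_nonneg_ser]
          semiring_closed_prod[OF semiring_closed_nonneg_ser]
          semiring_closed_add[OF semiring_closed_nonneg_ser]
          semiring_closed_1[OF semiring_closed_nonneg_ser])
  qed
  obtain V where V: "qdiff_system Q V" "\<And>m i. V m i \<in> nonneg_ser"
    and V_0: "\<And>i. V 0 i = (\<Prod>r<k. b r 0 i)"
    by (rule qdiff_system_prod[OF semiring_closed_nonneg_ser Q, where K = k and b = b,
          OF b_system b_nonneg]) (rule that)
  have "qpoch (- (vy * vq)) vq (k * i) = V 0 i" for i
    using qpoch_residue_split[of "- vy" vq k i]
    by (simp add: V_0 b_def c_def Q_def vq_def)
  then have P_V_0: "sum_X_power series2_weight 0 * V 0 i = sum_X_power series2_weight (k * i)" for i
    using qpoch_neg_y_mult_sum_X_power_series2_weight[of "k * i"] by (simp add: mult.commute)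
  show ?thesis
    by (rule zcoeff_nonneg_if_qdiff_system[OF k vanishes_below_series2_weight
          series2_weight_in_zfree_ser sum_X_power_in_zfree_ser[OF series2_weight_in_zfree_ser]
          sum_X_power_series2_weight_nth_0 V(1)[unfolded Q_def] V(2) P_V_0 series2_eq])
qed

theorem corollary1p8:
  fixes k :: nat
  assumes "k \<ge> 1"
  shows "\<forall>l m n. coeff_yzq (series1 k) l m n \<ge> 0 \<and> coeff_yzq (series2 k) l m n \<ge> 0"
  using assms by (auto intro!: coeff_yzq_nonneg series1_zcoeff_nonneg series2_zcoeff_nonneg)

end
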